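(* Let $K\ge 2$, let $\bm{\ell}\in\mathbb{R}^K$ be a logit vector, and let $\hat{\bm{\sigma}}=\mathrm{softmax}(\bm{\ell})\in(0,1)^K$, i.e. $\hat{\bm{\sigma}}_i=\exp(\bm{\ell}_i)/\sum_{k=1}^K\exp(\bm{\ell}_k)$. Define the logit distance vector $\bm{d}\in\mathbb{R}^K$ by $\bm{d}_k=\max_{1\le i\le K}\bm{\ell}_i-\bm{\ell}_k$, and let ${\bm{u}}=(1/K,\dots,1/K)$ be the uniform distribution on $K$ classes. Then $$\mathrm{KL}[{\bm{u}}\,\|\,\hat{\bm{\sigma}}]\;\le\;\frac{1}{K}\sum_{i=1}^K\bm{d}_i\;\le\;\mathrm{KL}[{\bm{u}}\,\|\,\hat{\bm{\sigma}}]+\log K,$$ equivalently, writing $\mathcal{C}=-\frac{1}{K}\sum_{k=1}^K\log\hat{\bm{\sigma}}_k=\mathrm{KL}[{\bm{u}}\|\hat{\bm{\sigma}}]+\log K$, one has $\mathcal{C}-\log K\le \frac1K\sum_i\bm{d}_i\le \mathcal{C}$.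
   Context: $\mathrm{KL}[{\bm{u}}\|\hat{\bm{\sigma}}]=\sum_{k=1}^K u_k\log(u_k/\hat{\bm{\sigma}}_k)$ with natural logarithm. The logit-distance vector corresponds to a hard constraint $\bm{d}=\bm{0}$ (all logits equal), and $\frac1K\sum_i \bm{d}_i$ is the associated linear penalty. *)

theory Defs
  imports Complex_Main
begin

text \<open>Vectors in R^K are represented as functions nat => real on the index set {0..<K}.\<close>

definition softmax :: "nat \<Rightarrow> (nat \<Rightarrow> real) \<Rightarrow> nat \<Rightarrow> real" where
  "softmax K l i = exp (l i) / (\<Sum>k<K. exp (l k))"

definition logit_dist :: "nat \<Rightarrow> (nat \<Rightarrow> real) \<Rightarrow> nat \<Rightarrow> real" where
  "logit_dist K l k = Max (l ` {..<K}) - l k"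

definition uniform_dist :: "nat \<Rightarrow> nat \<Rightarrow> real" where
  "uniform_dist K k = 1 / real K"

definition KL :: "nat \<Rightarrow> (nat \<Rightarrow> real) \<Rightarrow> (nat \<Rightarrow> real) \<Rightarrow> real" where
  "KL K u s = (\<Sum>k<K. u k * ln (u k / s k))"

end

theory Submission
  imports Defs
begin

text \<open>Both quantities are affine in the logits up to the log-sum-exp
  \<open>LSE l = ln (\<Sum>k<K. exp (l k))\<close>: with \<open>\<mu>\<close> the mean logit,
  \<open>KL[u \<parallel> softmax l] = LSE l - ln K - \<mu>\<close> and the mean logit distance is
  \<open>max l - \<mu>\<close>. The theorem is thus the two-sided bound
  \<open>max l \<le> LSE l \<le> max l + ln K\<close>: the sum of exponentials contains the term
  \<open>exp (max l)\<close> and consists of \<open>K\<close> terms each at most that large.\<close>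

lemma Max_le_ln_sum_exp:
  fixes f :: "'a \<Rightarrow> real"
  assumes "finite A" "A \<noteq> {}"
  shows "Max (f ` A) \<le> ln (\<Sum>x\<in>A. exp (f x))"
proof -
  have "Max (f ` A) \<in> f ` A"
    using assms by (intro Max_in) auto
  then obtain a where "a \<in> A" "Max (f ` A) = f a"
    by auto
  moreover have "exp (f a) \<le> (\<Sum>x\<in>A. exp (f x))"
    using \<open>a \<in> A\<close> assms(1) by (intro member_le_sum) auto
  ultimately show ?thesis
    by (metis exp_gt_zero ln_exp ln_mono)
qed

lemma ln_sum_exp_le_Max:
  fixes f :: "'a \<Rightarrow> real"
  assumes "finite A" "A \<noteq> {}"
  shows "ln (\<Sum>x\<in>A. exp (f x)) \<le> ln (real (card A)) + Max (f ` A)"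
proof -
  have "(\<Sum>x\<in>A. exp (f x)) \<le> (\<Sum>x\<in>A. exp (Max (f ` A)))"
    using assms(1) by (intro sum_mono) auto
  also have "\<dots> = real (card A) * exp (Max (f ` A))"
    by simp
  finally have "ln (\<Sum>x\<in>A. exp (f x)) \<le> ln (real (card A) * exp (Max (f ` A)))"
    using assms by (intro ln_mono) (auto intro: sum_pos)
  also have "\<dots> = ln (real (card A)) + Max (f ` A)"
    using assms by (simp add: ln_mult card_gt_0_iff)
  finally show ?thesis .
qed

lemma KL_uniform_softmax:
  assumes "K > 0"
  shows "KL K (uniform_dist K) (softmax K l)
           = ln (\<Sum>k<K. exp (l k)) - ln (real K) - (\<Sum>k<K. l k) / real K"
proof -
  define S where "S = (\<Sum>k<K. exp (l k))"
  have "S > 0"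
    unfolding S_def using assms by (intro sum_pos) auto
  have "ln (uniform_dist K k / softmax K l k) = ln S - ln (real K) - l k" for k
  proof -
    have "uniform_dist K k / softmax K l k = S / (real K * exp (l k))"
      unfolding uniform_dist_def softmax_def S_def[symmetric] by simp
    then show ?thesis
      using \<open>S > 0\<close> assms by (simp add: ln_div ln_mult)
  qed
  then have "KL K (uniform_dist K) (softmax K l) = (\<Sum>k<K. ln S - ln (real K) - l k) / real K"
    unfolding KL_def uniform_dist_def by (simp add: sum_divide_distrib)
  also have "\<dots> = (real K * (ln S - ln (real K)) - (\<Sum>k<K. l k)) / real K"
    by (simp add: sum_subtractf)
  also have "\<dots> = ln S - ln (real K) - (\<Sum>k<K. l k) / real K"
    using assms by (simp add: diff_divide_distrib)
  finally show ?thesis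
    unfolding S_def .
qed

lemma mean_logit_dist:
  assumes "K > 0"
  shows "(1 / real K) * (\<Sum>i<K. logit_dist K l i) = Max (l ` {..<K}) - (\<Sum>k<K. l k) / real K"
  using assms by (simp add: logit_dist_def sum_subtractf field_simps)

theorem proposition3p3:
  fixes K :: nat and l :: "nat \<Rightarrow> real"
  assumes "K \<ge> 2"
  shows "KL K (uniform_dist K) (softmax K l)
           \<le> (1 / real K) * (\<Sum>i<K. logit_dist K l i)
       \<and> (1 / real K) * (\<Sum>i<K. logit_dist K l i)
           \<le> KL K (uniform_dist K) (softmax K l) + ln (real K)"
proof -
  have "K > 0" "{..<K} \<noteq> {}"
    using assms by (auto simp: lessThan_empty_iff)
  then show ?thesis
    using Max_le_ln_sum_exp[of "{..<K}" l] ln_sum_exp_le_Max[of "{..<K}" l]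
    unfolding KL_uniform_softmax[OF \<open>K > 0\<close>] mean_logit_dist[OF \<open>K > 0\<close>]
    by simp
qed

end
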